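(* Let $d$ be a positive integer and let $P = \{x\in\mathbb{R}^d : Ax \le \mathbf{1}\}$ (for a real matrix $A$ with $d$ columns, $\mathbf{1}$ the all-ones vector) satisfy $P\cap\mathbb{Z}^d = \lozenge_d$. Then $Q = \{(x,y)\in\mathbb{R}^{d+1} : A(x - y e_1)\le\mathbf{1},\ -1\le x_1+y\le 1\}$ satisfies $Q \cap \mathbb{Z}^{d+1} = \lozenge_{d+1}$.
   Context: $\lozenge_d = \{0,\pm e_1,\dots,\pm e_d\}\subseteq\mathbb{Z}^d$ is the discrete standard crosspolytope, with $e_i$ the standard unit vectors; in $\mathbb{R}^{d+1}$ a point is written $(x,y)$ with $x\in\mathbb{R}^d$, $y\in\mathbb{R}$, so $\lozenge_{d+1} = (\lozenge_d\times\{0\})\cup\{(0,\pm1)\}$. *)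

theory Defs
  imports Complex_Main
begin

text \<open>Points of R^d are encoded as functions nat => real that vanish at all
  indices >= d; coordinate i (0-based) corresponds to x_(i+1).
  In R^(d+1), a point (x,y) has x in coordinates 0..d-1 and y in coordinate d.\<close>

definition unitv :: "nat \<Rightarrow> nat \<Rightarrow> int" where
  "unitv i = (\<lambda>j. if j = i then 1 else 0)"

definition crosspolytope :: "nat \<Rightarrow> (nat \<Rightarrow> int) set" where
  "crosspolytope d = {\<lambda>_. 0} \<union> {unitv i | i. i < d} \<union> {(\<lambda>j. - unitv i j) | i. i < d}"

definition lattice_points :: "nat \<Rightarrow> (nat \<Rightarrow> real) set \<Rightarrow> (nat \<Rightarrow> int) set" where
  "lattice_points d S = {z. (\<forall>i\<ge>d. z i = 0) \<and> (\<lambda>i. real_of_int (z i)) \<in> S}"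

definition polyP :: "nat \<Rightarrow> nat \<Rightarrow> (nat \<Rightarrow> nat \<Rightarrow> real) \<Rightarrow> (nat \<Rightarrow> real) set" where
  "polyP m d A = {x. (\<forall>i\<ge>d. x i = 0) \<and> (\<forall>r<m. (\<Sum>j<d. A r j * x j) \<le> 1)}"

definition polyQ :: "nat \<Rightarrow> nat \<Rightarrow> (nat \<Rightarrow> nat \<Rightarrow> real) \<Rightarrow> (nat \<Rightarrow> real) set" where
  "polyQ m d A = {z. (\<forall>i\<ge>d+1. z i = 0) \<and>
      (\<forall>r<m. (\<Sum>j<d. A r j * (z j - (if j = 0 then z d else 0))) \<le> 1) \<and>
      -1 \<le> z 0 + z d \<and> z 0 + z d \<le> 1}"

end

(* Q is the preimage of P \<times> [-1,1] under the unimodular shear (x,y) \<mapsto> (x - y e_1, x_1 + y),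
   so its lattice points are the integer (x,y) with x - y e_1 in the crosspolytope and
   |x_1 + y| \<le> 1. The crosspolytope consists of the integer points of l1-norm at most 1, so with
   a = x_1, b = y and r = |x_2| + ... + |x_d| it remains to see that |a - b| + r \<le> 1 and
   |a + b| \<le> 1 iff |a| + |b| + r \<le> 1. For r = 0 this is |a| + |b| = max(|a - b|, |a + b|); for
   r = 1 both sides force a = b = 0, which needs integrality. *)

theory Submission
  imports Defs
begin

lemma sum_abs_le_one_int_iff:
  fixes z :: "'a \<Rightarrow> int"
  assumes "finite I"
  shows "(\<Sum>i\<in>I. \<bar>z i\<bar>) \<le> 1 \<longleftrightarrow>
    (\<forall>i\<in>I. z i = 0) \<or> (\<exists>i\<in>I. \<bar>z i\<bar> = 1 \<and> (\<forall>j\<in>I - {i}. z j = 0))"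
proof
  assume le: "(\<Sum>i\<in>I. \<bar>z i\<bar>) \<le> 1"
  show "(\<forall>i\<in>I. z i = 0) \<or> (\<exists>i\<in>I. \<bar>z i\<bar> = 1 \<and> (\<forall>j\<in>I - {i}. z j = 0))"
  proof (cases "\<forall>i\<in>I. z i = 0")
    case False
    then obtain i where i: "i \<in> I" "z i \<noteq> 0" by blast
    have split: "(\<Sum>j\<in>I. \<bar>z j\<bar>) = \<bar>z i\<bar> + (\<Sum>j\<in>I - {i}. \<bar>z j\<bar>)"
      using assms i(1) by (rule sum.remove)
    have "(\<Sum>j\<in>I - {i}. \<bar>z j\<bar>) \<ge> 0" by (simp add: sum_nonneg)
    with le split i(2) have "\<bar>z i\<bar> = 1" "(\<Sum>j\<in>I - {i}. \<bar>z j\<bar>) = 0" by linarith+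
    then have "\<forall>j\<in>I - {i}. z j = 0" using assms by (simp add: sum_nonneg_eq_0_iff)
    with i(1) \<open>\<bar>z i\<bar> = 1\<close> show ?thesis by blast
  qed simp
next
  assume "(\<forall>i\<in>I. z i = 0) \<or> (\<exists>i\<in>I. \<bar>z i\<bar> = 1 \<and> (\<forall>j\<in>I - {i}. z j = 0))"
  then show "(\<Sum>i\<in>I. \<bar>z i\<bar>) \<le> 1"
  proof
    assume "\<exists>i\<in>I. \<bar>z i\<bar> = 1 \<and> (\<forall>j\<in>I - {i}. z j = 0)"
    then obtain i where "i \<in> I" "\<bar>z i\<bar> = 1" "\<forall>j\<in>I - {i}. z j = 0" by blast
    then show ?thesis using assms by (simp add: sum.remove)
  qed simp
qed

lemma crosspolytope_eq_l1_ball: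
  "crosspolytope d = {z. (\<forall>i\<ge>d. z i = 0) \<and> (\<Sum>i<d. \<bar>z i\<bar>) \<le> 1}"
proof (intro set_eqI iffI)
  fix z assume "z \<in> crosspolytope d"
  then show "z \<in> {z. (\<forall>i\<ge>d. z i = 0) \<and> (\<Sum>i<d. \<bar>z i\<bar>) \<le> 1}"
    by (auto simp: crosspolytope_def unitv_def if_distrib[of abs] cong: if_cong)
next
  fix z :: "nat \<Rightarrow> int" assume z: "z \<in> {z. (\<forall>i\<ge>d. z i = 0) \<and> (\<Sum>i<d. \<bar>z i\<bar>) \<le> 1}"
  then consider "\<forall>i<d. z i = 0" | i where "i < d" "\<bar>z i\<bar> = 1" "\<forall>j<d. j \<noteq> i \<longrightarrow> z j = 0"
    using sum_abs_le_one_int_iff[of "{..<d}" z] by auto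
  then show "z \<in> crosspolytope d"
  proof cases
    case 1
    with z have "z = (\<lambda>_. 0)" by (auto simp: not_less[symmetric])
    then show ?thesis by (simp add: crosspolytope_def)
  next
    case (2 i)
    with z have "z = unitv i \<or> z = (\<lambda>j. - unitv i j)"
      by (auto simp: unitv_def abs_eq_iff fun_eq_iff not_less[symmetric])
    with \<open>i < d\<close> show ?thesis by (auto simp: crosspolytope_def)
  qed
qed

lemma abs_diff_abs_add_le_one_iff:
  fixes a b r :: int
  assumes "r \<ge> 0"
  shows "\<bar>a - b\<bar> + r \<le> 1 \<and> \<bar>a + b\<bar> \<le> 1 \<longleftrightarrow> \<bar>a\<bar> + \<bar>b\<bar> + r \<le> 1"
  using assms by arith

definition shear :: "nat \<Rightarrow> (nat \<Rightarrow> 'a::ab_group_add) \<Rightarrow> nat \<Rightarrow> 'a" where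
  "shear d z = (\<lambda>j. if j < d then z j - (if j = 0 then z d else 0) else 0)"

lemma of_int_shear: "(\<lambda>j. of_int (shear d z j)) = shear d (\<lambda>j. of_int (z j))"
  by (simp add: shear_def fun_eq_iff)

lemma mem_polyQ_iff_shear:
  "z \<in> polyQ m d A \<longleftrightarrow>
     (\<forall>i\<ge>d+1. z i = 0) \<and> shear d z \<in> polyP m d A \<and> \<bar>z 0 + z d\<bar> \<le> 1"
proof -
  have "(\<Sum>j<d. A r j * shear d z j) = (\<Sum>j<d. A r j * (z j - (if j = 0 then z d else 0)))" for r
    by (rule sum.cong) (simp_all add: shear_def)
  then show ?thesis by (auto simp: polyQ_def polyP_def shear_def)
qed

lemma lattice_points_polyQ:
  "lattice_points (d+1) (polyQ m d A) =
     {z. (\<forall>i\<ge>d+1. z i = 0) \<and> shear d z \<in> lattice_points d (polyP m d A) \<and> \<bar>z 0 + z d\<bar> \<le> 1}"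
proof -
  have "\<bar>real_of_int (z 0) + real_of_int (z d)\<bar> \<le> 1 \<longleftrightarrow> \<bar>z 0 + z d\<bar> \<le> 1" for z :: "nat \<Rightarrow> int"
    by linarith
  then show ?thesis
    by (auto simp: lattice_points_def mem_polyQ_iff_shear of_int_shear[symmetric] shear_def)
qed

lemma sum_abs_shear:
  fixes z :: "nat \<Rightarrow> 'a::ordered_ab_group_add_abs"
  assumes "d \<ge> 1"
  shows "(\<Sum>i<d. \<bar>shear d z i\<bar>) = \<bar>z 0 - z d\<bar> + (\<Sum>i\<in>{1..<d}. \<bar>z i\<bar>)"
    and "(\<Sum>i<d+1. \<bar>z i\<bar>) = \<bar>z 0\<bar> + \<bar>z d\<bar> + (\<Sum>i\<in>{1..<d}. \<bar>z i\<bar>)"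
proof -
  have lt: "{..<d} = insert 0 {1..<d}" and lt_Suc: "{..<d+1} = insert d (insert 0 {1..<d})"
    using assms by auto
  show "(\<Sum>i<d. \<bar>shear d z i\<bar>) = \<bar>z 0 - z d\<bar> + (\<Sum>i\<in>{1..<d}. \<bar>z i\<bar>)"
    unfolding lt using assms by (simp add: shear_def)
  show "(\<Sum>i<d+1. \<bar>z i\<bar>) = \<bar>z 0\<bar> + \<bar>z d\<bar> + (\<Sum>i\<in>{1..<d}. \<bar>z i\<bar>)"
    unfolding lt_Suc using assms by (simp add: ac_simps)
qed

lemma shear_crosspolytope_iff:
  fixes z :: "nat \<Rightarrow> int"
  assumes "d \<ge> 1" and "\<forall>i\<ge>d+1. z i = 0"
  shows "shear d z \<in> crosspolytope d \<and> \<bar>z 0 + z d\<bar> \<le> 1 \<longleftrightarrow> z \<in> crosspolytope (d+1)"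
proof -
  have "shear d z \<in> crosspolytope d \<longleftrightarrow> \<bar>z 0 - z d\<bar> + (\<Sum>i\<in>{1..<d}. \<bar>z i\<bar>) \<le> 1"
    unfolding crosspolytope_eq_l1_ball mem_Collect_eq sum_abs_shear(1)[OF assms(1)] by (simp add: shear_def)
  moreover have "z \<in> crosspolytope (d+1) \<longleftrightarrow> \<bar>z 0\<bar> + \<bar>z d\<bar> + (\<Sum>i\<in>{1..<d}. \<bar>z i\<bar>) \<le> 1"
    unfolding crosspolytope_eq_l1_ball mem_Collect_eq sum_abs_shear(2)[OF assms(1)] using assms(2) by blast
  moreover have "(\<Sum>i\<in>{1..<d}. \<bar>z i\<bar>) \<ge> 0" by (simp add: sum_nonneg)
  ultimately show ?thesis by (simp add: abs_diff_abs_add_le_one_iff)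
qed

theorem lemma5p3:
  fixes d m :: nat and A :: "nat \<Rightarrow> nat \<Rightarrow> real"
  assumes "d \<ge> 1"
    and "lattice_points d (polyP m d A) = crosspolytope d"
  shows "lattice_points (d+1) (polyQ m d A) = crosspolytope (d+1)"
proof -
  have "lattice_points (d+1) (polyQ m d A) =
      {z. (\<forall>i\<ge>d+1. z i = 0) \<and> shear d z \<in> crosspolytope d \<and> \<bar>z 0 + z d\<bar> \<le> 1}"
    unfolding lattice_points_polyQ assms(2) ..
  also have "\<dots> = {z. (\<forall>i\<ge>d+1. z i = 0) \<and> z \<in> crosspolytope (d+1)}"
    using shear_crosspolytope_iff[OF assms(1)] by blast
  also have "\<dots> = crosspolytope (d+1)"
    by (auto simp: crosspolytope_eq_l1_ball)
  finally show ?thesis .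
qed

end
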